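(* Let $m,n\ge 1$ and let $L_{m,n}$ be the generalized Laplacian matrix of the complete bipartite graph $K_{m,n}$, i.e. $L_{m,n}=\begin{pmatrix} \mathrm{diag}(x_1,\dots,x_m) & -J_{m,n}\\ -J_{n,m} & \mathrm{diag}(y_1,\dots,y_n)\end{pmatrix}$, where $J_{p,q}$ is the all-ones $p\times q$ matrix. Then the $3$-minors of $L_{m,n}$, each taken with the sign making its leading coefficient positive, are the following polynomials, where $1\le i_1<i_2<i_3\le m$ and $1\le j_1<j_2<j_3\le n$: - $y_{j_1}$, $y_{j_1}y_{j_2}$ and $y_{j_1}y_{j_2}y_{j_3}$ when $n\ge 3$; - $x_{i_1}$, $x_{i_1}x_{i_2}$ and $x_{i_1}x_{i_2}x_{i_3}$ when $m\ge 3$; - $y_{j_1}y_{j_2}x_{i_1}-y_{j_1}-y_{j_2}$ when $n\ge 2$; - $x_{i_1}x_{i_2}y_{j_1}-x_{i_1}-x_{i_2}$ when $m\ge 2$; - $x_{i_1}+x_{i_2}$, $y_{j_1}+y_{j_2}$ and $x_{i_1}y_{j_1}$ when $m\ge 2$ and $n\ge 2$.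
   Context: A $3$-minor of a matrix is the determinant of a $3\times 3$ submatrix (choice of 3 rows and 3 columns). Here $x_1,\dots,x_m,y_1,\dots,y_n$ are indeterminates and the minors lie in $\mathbb{Z}[x_1,\dots,x_m,y_1,\dots,y_n]$. *)

theory Defs
  imports "HOL-Library.Poly_Mapping" "Jordan_Normal_Form.Determinant" "Jordan_Normal_Form.DL_Submatrix"
begin

text \<open>Indeterminates x_1..x_m (X i) and y_1..y_n (Y j), 1-based as in the paper.\<close>
datatype var = X nat | Y nat

type_synonym zpoly = "(var \<Rightarrow>\<^sub>0 nat) \<Rightarrow>\<^sub>0 int"

definition Var :: "var \<Rightarrow> zpoly" where
  "Var v = Poly_Mapping.single (Poly_Mapping.single v 1) 1"

text \<open>Generalized Laplacian of K_{m,n}; rows/columns 0..m-1 correspond to x_1..x_m,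
rows/columns m..m+n-1 to y_1..y_n.\<close>
definition laplacian_Kmn :: "nat \<Rightarrow> nat \<Rightarrow> zpoly mat" where
  "laplacian_Kmn m n = mat (m + n) (m + n) (\<lambda>(i, j).
     if i < m \<and> j < m then (if i = j then Var (X (i + 1)) else 0)
     else if m \<le> i \<and> m \<le> j then (if i = j then Var (Y (i - m + 1)) else 0)
     else - 1)"

definition three_minors :: "zpoly mat \<Rightarrow> zpoly set" where
  "three_minors A = {det (submatrix A I J) | I J.
      I \<subseteq> {..<dim_row A} \<and> J \<subseteq> {..<dim_col A} \<and> card I = 3 \<and> card J = 3}"

definition listed_minors :: "nat \<Rightarrow> nat \<Rightarrow> zpoly set" where
  "listed_minors m n =
     (if n \<ge> 3 then
        {Var (Y j1) | j1. 1 \<le> j1 \<and> j1 \<le> n}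
      \<union> {Var (Y j1) * Var (Y j2) | j1 j2. 1 \<le> j1 \<and> j1 < j2 \<and> j2 \<le> n}
      \<union> {Var (Y j1) * Var (Y j2) * Var (Y j3) | j1 j2 j3. 1 \<le> j1 \<and> j1 < j2 \<and> j2 < j3 \<and> j3 \<le> n}
      else {})
   \<union> (if m \<ge> 3 then
        {Var (X i1) | i1. 1 \<le> i1 \<and> i1 \<le> m}
      \<union> {Var (X i1) * Var (X i2) | i1 i2. 1 \<le> i1 \<and> i1 < i2 \<and> i2 \<le> m}
      \<union> {Var (X i1) * Var (X i2) * Var (X i3) | i1 i2 i3. 1 \<le> i1 \<and> i1 < i2 \<and> i2 < i3 \<and> i3 \<le> m}
      else {})
   \<union> (if n \<ge> 2 then
        {Var (Y j1) * Var (Y j2) * Var (X i1) - Var (Y j1) - Var (Y j2) | i1 j1 j2.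
           1 \<le> i1 \<and> i1 \<le> m \<and> 1 \<le> j1 \<and> j1 < j2 \<and> j2 \<le> n}
      else {})
   \<union> (if m \<ge> 2 then
        {Var (X i1) * Var (X i2) * Var (Y j1) - Var (X i1) - Var (X i2) | i1 i2 j1.
           1 \<le> i1 \<and> i1 < i2 \<and> i2 \<le> m \<and> 1 \<le> j1 \<and> j1 \<le> n}
      else {})
   \<union> (if m \<ge> 2 \<and> n \<ge> 2 then
        {Var (X i1) + Var (X i2) | i1 i2. 1 \<le> i1 \<and> i1 < i2 \<and> i2 \<le> m}
      \<union> {Var (Y j1) + Var (Y j2) | j1 j2. 1 \<le> j1 \<and> j1 < j2 \<and> j2 \<le> n}
      \<union> {Var (X i1) * Var (Y j1) | i1 j1. 1 \<le> i1 \<and> i1 \<le> m \<and> 1 \<le> j1 \<and> j1 \<le> n}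
      else {})"

end

theory Submission
  imports Defs
begin

text \<open>Each entry of the Laplacian only depends on whether
  its row and column lie in the x-block or the y-block and on whether they coincide, so splitting
  into cases according to where the two triples cross the block boundary evaluates every minor
  symbolically; the nonzero ones are, up to sign, exactly the listed polynomials. Conversely every
  listed polynomial is the minor on an explicitly chosen pair of triples, and it is nonzero because
  some monomial occurs in it with a nonzero coefficient.\<close>

lemma det_1x1: "A \<in> carrier_mat 1 1 \<Longrightarrow> det A = A $$ (0, 0)"
  by (simp add: det_def' [of _ 1])

lemma det_2x2:
  assumes A: "A \<in> carrier_mat 2 2"
  shows "det (A :: 'a :: comm_ring_1 mat) = A $$ (0, 0) * A $$ (1, 1) - A $$ (1, 0) * A $$ (0, 1)"
proof -
  have "det A = (\<Sum>i<2. A $$ (i, 0) * cofactor A i 0)"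
    by (rule laplace_expansion_column[OF A]) simp
  also have "\<dots> = A $$ (0, 0) * cofactor A 0 0 + A $$ (1, 0) * cofactor A 1 0"
    by (simp add: numeral_2_eq_2)
  also have "cofactor A 0 0 = A $$ (1, 1)"
    unfolding cofactor_def using A by (subst det_1x1) (auto simp: mat_delete_def insert_index_def)
  also have "cofactor A 1 0 = - A $$ (0, 1)"
    unfolding cofactor_def using A by (subst det_1x1) (auto simp: mat_delete_def insert_index_def)
  finally show ?thesis by simp
qed

definition minor3 :: "(nat \<Rightarrow> nat \<Rightarrow> 'a :: comm_ring_1) \<Rightarrow> nat \<Rightarrow> nat \<Rightarrow> nat \<Rightarrow> nat \<Rightarrow> nat \<Rightarrow> nat \<Rightarrow> 'a" where
  "minor3 f r0 r1 r2 c0 c1 c2 =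
     f r0 c0 * (f r1 c1 * f r2 c2 - f r2 c1 * f r1 c2)
   - f r1 c0 * (f r0 c1 * f r2 c2 - f r2 c1 * f r0 c2)
   + f r2 c0 * (f r0 c1 * f r1 c2 - f r1 c1 * f r0 c2)"

lemma det_3x3:
  assumes A: "A \<in> carrier_mat 3 3"
  shows "det (A :: 'a :: comm_ring_1 mat) = minor3 (\<lambda>i j. A $$ (i, j)) 0 1 2 0 1 2"
proof -
  have "det A = (\<Sum>i<3. A $$ (i, 0) * cofactor A i 0)"
    by (rule laplace_expansion_column[OF A]) simp
  also have "\<dots> = A $$ (0, 0) * cofactor A 0 0 + A $$ (1, 0) * cofactor A 1 0 + A $$ (2, 0) * cofactor A 2 0"
    by (simp add: lessThan_nat_numeral)
  also have "cofactor A 0 0 = A $$ (1, 1) * A $$ (2, 2) - A $$ (2, 1) * A $$ (1, 2)"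
    unfolding cofactor_def using A
    by (subst det_2x2) (auto simp: mat_delete_def insert_index_def numeral_2_eq_2)
  also have "cofactor A 1 0 = - (A $$ (0, 1) * A $$ (2, 2) - A $$ (2, 1) * A $$ (0, 2))"
    unfolding cofactor_def using A
    by (subst det_2x2) (auto simp: mat_delete_def insert_index_def numeral_2_eq_2)
  also have "cofactor A 2 0 = A $$ (0, 1) * A $$ (1, 2) - A $$ (1, 1) * A $$ (0, 2)"
    unfolding cofactor_def using A
    by (subst det_2x2) (auto simp: mat_delete_def insert_index_def numeral_2_eq_2)
  finally show ?thesis by (simp add: minor3_def algebra_simps)
qed

lemma minor3_swap_rows_01: "minor3 f b a c d e g = - minor3 f a b c d e g"
  unfolding minor3_def by (simp add: algebra_simps)

lemma minor3_swap_rows_12: "minor3 f a c b d e g = - minor3 f a b c d e g"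
  unfolding minor3_def by (simp add: algebra_simps)

lemma minor3_swap_cols_01: "minor3 f a b c e d g = - minor3 f a b c d e g"
  unfolding minor3_def by (simp add: algebra_simps)

lemma minor3_swap_cols_12: "minor3 f a b c d g e = - minor3 f a b c d e g"
  unfolding minor3_def by (simp add: algebra_simps)

lemma card_3_sorted:
  assumes "card (I :: 'a :: linorder set) = 3"
  obtains a b c where "a < b" "b < c" "I = {a, b, c}"
proof -
  obtain x y z where I: "I = {x, y, z}" "x \<noteq> y" "y \<noteq> z" "x \<noteq> z"
    using assms card_3_iff by metis
  from I(2-4) consider "x < y" "y < z" | "x < z" "z < y" | "y < x" "x < z"
    | "y < z" "z < x" | "z < x" "x < y" | "z < y" "y < x"
    by (meson linorder_neqE)
  then show ?thesis
    using that[of x y z] that[of x z y] that[of y x z] that[of y z x] that[of z x y] that[of z y x]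
    unfolding I(1) by cases (auto simp: insert_commute)
qed

lemma linorder_wlog3:
  fixes P :: "'a :: linorder \<Rightarrow> 'a \<Rightarrow> 'a \<Rightarrow> bool"
  assumes swap01: "\<And>a b c. P b a c \<longleftrightarrow> P a b c" and swap12: "\<And>a b c. P a c b \<longleftrightarrow> P a b c"
    and sorted: "\<And>a b c. a < b \<Longrightarrow> b < c \<Longrightarrow> a \<in> S \<Longrightarrow> b \<in> S \<Longrightarrow> c \<in> S \<Longrightarrow> P a b c"
    and S: "a \<in> S" "b \<in> S" "c \<in> S" and distinct: "a \<noteq> b" "b \<noteq> c" "a \<noteq> c"
  shows "P a b c"
proof -
  from distinct consider "a < b" "b < c" | "a < c" "c < b" | "b < a" "a < c"
    | "b < c" "c < a" | "c < a" "a < b" | "c < b" "b < a"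
    by (meson linorder_neqE)
  then show ?thesis
  proof cases
    case 1 then show ?thesis using sorted S by blast
  next
    case 2 then show ?thesis using sorted[of a c b] S swap12[of a b c] by blast
  next
    case 3 then show ?thesis using sorted[of b a c] S swap01[of a b c] by blast
  next
    case 4 then show ?thesis using sorted[of b c a] S swap01[of a b c] swap12[of b a c] by blast
  next
    case 5 then show ?thesis using sorted[of c a b] S swap12[of a b c] swap01[of a c b] by blast
  next
    case 6 then show ?thesis
      using sorted[of c b a] S swap01[of b c a] swap12[of b a c] swap01[of a b c] by metis
  qed
qed

lemma pick_sorted_triple:
  assumes "a < b" "b < c" "i < 3"
  shows "pick {a, b, c} i = [a, b, c] ! i"
proof -
  have p0: "pick {a, b, c} 0 = a"
    using assms by (simp only: pick.simps, intro Least_equality) auto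
  have p1: "pick {a, b, c} (Suc 0) = b"
    using assms by (simp only: pick.simps(2) p0, intro Least_equality) auto
  have p2: "pick {a, b, c} (Suc (Suc 0)) = c"
    using assms unfolding pick.simps(2)[of _ "Suc 0"] p1 by (intro Least_equality) auto
  from \<open>i < 3\<close> have "i = 0 \<or> i = Suc 0 \<or> i = Suc (Suc 0)" by linarith
  then show ?thesis using p0 p1 p2 by auto
qed

definition laplacian_entry :: "nat \<Rightarrow> nat \<Rightarrow> nat \<Rightarrow> zpoly" where
  "laplacian_entry m i j =
     (if i < m \<and> j < m then (if i = j then Var (X (i + 1)) else 0)
      else if m \<le> i \<and> m \<le> j then (if i = j then Var (Y (i - m + 1)) else 0)
      else - 1)"

lemma dim_laplacian_Kmn [simp]:
  "dim_row (laplacian_Kmn m n) = m + n" "dim_col (laplacian_Kmn m n) = m + n"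
  by (simp_all add: laplacian_Kmn_def)

lemma laplacian_Kmn_index:
  "i < m + n \<Longrightarrow> j < m + n \<Longrightarrow> laplacian_Kmn m n $$ (i, j) = laplacian_entry m i j"
  unfolding laplacian_Kmn_def laplacian_entry_def by simp

lemma det_submatrix_laplacian_Kmn:
  assumes "a < b" "b < c" "c < m + n" "d < e" "e < f" "f < m + n"
  shows "det (submatrix (laplacian_Kmn m n) {a, b, c} {d, e, f}) = minor3 (laplacian_entry m) a b c d e f"
proof -
  let ?L = "laplacian_Kmn m n"
  let ?A = "submatrix ?L {a, b, c} {d, e, f}"
  have rows: "card {i. i < dim_row ?L \<and> i \<in> {a, b, c}} = 3"
    and cols: "card {j. j < dim_col ?L \<and> j \<in> {d, e, f}} = 3"
  proof -
    have "{i. i < dim_row ?L \<and> i \<in> {a, b, c}} = {a, b, c}" "{j. j < dim_col ?L \<and> j \<in> {d, e, f}} = {d, e, f}"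
      using assms by auto
    then show "card {i. i < dim_row ?L \<and> i \<in> {a, b, c}} = 3" "card {j. j < dim_col ?L \<and> j \<in> {d, e, f}} = 3"
      using assms by simp_all
  qed
  have "?A \<in> carrier_mat 3 3"
    unfolding carrier_mat_def mem_Collect_eq dim_submatrix rows cols by simp
  moreover have "?A $$ (i, j) = laplacian_entry m ([a, b, c] ! i) ([d, e, f] ! j)"
    if "i < 3" "j < 3" for i j
  proof -
    have "?A $$ (i, j) = ?L $$ (pick {a, b, c} i, pick {d, e, f} j)"
      by (rule submatrix_index) (use that in \<open>simp_all only: rows cols\<close>)
    moreover have "pick {a, b, c} i = [a, b, c] ! i" "pick {d, e, f} j = [d, e, f] ! j"
      using that assms by (simp_all add: pick_sorted_triple)
    moreover have "[a, b, c] ! i < m + n" "[d, e, f] ! j < m + n"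
      using that assms by (auto simp: less_Suc_eq numeral_3_eq_3)
    ultimately show ?thesis
      by (simp add: laplacian_Kmn_index)
  qed
  ultimately show ?thesis
    by (simp add: det_3x3 minor3_def)
qed

lemma three_minors_laplacian_Kmn_iff:
  "p \<in> three_minors (laplacian_Kmn m n) \<longleftrightarrow>
   (\<exists>a b c d e f. a < b \<and> b < c \<and> c < m + n \<and> d < e \<and> e < f \<and> f < m + n \<and>
      p = minor3 (laplacian_entry m) a b c d e f)"
proof
  assume "p \<in> three_minors (laplacian_Kmn m n)"
  then obtain I J where IJ: "I \<subseteq> {..<m + n}" "J \<subseteq> {..<m + n}" "card I = 3" "card J = 3"
    and p: "p = det (submatrix (laplacian_Kmn m n) I J)"
    unfolding three_minors_def by auto
  obtain a b c where I: "a < b" "b < c" "I = {a, b, c}" using card_3_sorted[OF IJ(3)] .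
  obtain d e f where J: "d < e" "e < f" "J = {d, e, f}" using card_3_sorted[OF IJ(4)] .
  have "c < m + n" "f < m + n" using IJ I J by auto
  then show "\<exists>a b c d e f. a < b \<and> b < c \<and> c < m + n \<and> d < e \<and> e < f \<and> f < m + n \<and>
      p = minor3 (laplacian_entry m) a b c d e f"
    using det_submatrix_laplacian_Kmn[of a b c m n d e f] I J p by blast
next
  assume "\<exists>a b c d e f. a < b \<and> b < c \<and> c < m + n \<and> d < e \<and> e < f \<and> f < m + n \<and>
      p = minor3 (laplacian_entry m) a b c d e f"
  then obtain a b c d e f where abc: "a < b" "b < c" "c < m + n" and def: "d < e" "e < f" "f < m + n"
    and p: "p = minor3 (laplacian_entry m) a b c d e f"
    by blast
  have "{a, b, c} \<subseteq> {..<m + n}" "{d, e, f} \<subseteq> {..<m + n}" "card {a, b, c} = 3" "card {d, e, f} = 3"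
    using abc def by auto
  then show "p \<in> three_minors (laplacian_Kmn m n)"
    unfolding three_minors_def p det_submatrix_laplacian_Kmn[OF abc def, symmetric]
    by (intro CollectI exI[of _ "{a, b, c}"] exI[of _ "{d, e, f}"]) simp
qed

lemma lookup_Var: "Poly_Mapping.lookup (Var v) t = (if t = Poly_Mapping.single v 1 then 1 else 0)"
  unfolding Var_def by (simp add: lookup_single when_def)

lemma Var_mult_Var: "Var u * Var v = Poly_Mapping.single (Poly_Mapping.single u 1 + Poly_Mapping.single v 1) 1"
  unfolding Var_def by (simp add: mult_single)

lemma Var_mult_Var_mult_Var:
  "Var u * Var v * Var w =
   Poly_Mapping.single (Poly_Mapping.single u 1 + Poly_Mapping.single v 1 + Poly_Mapping.single w 1) 1"
  unfolding Var_def by (simp add: mult_single)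

lemma single_inject: "k \<noteq> 0 \<Longrightarrow> Poly_Mapping.single v k = Poly_Mapping.single w k \<longleftrightarrow> v = w"
  by (metis lookup_single_eq lookup_single_not_eq)

lemma Var_neq_zero: "Var v \<noteq> 0"
  unfolding Var_def by (rule frag_of_nonzero)

lemma Var_mult_Var_neq_zero: "Var u * Var v \<noteq> 0"
  unfolding Var_mult_Var by (rule frag_of_nonzero)

lemma Var_mult_Var_mult_Var_neq_zero: "Var u * Var v * Var w \<noteq> 0"
  unfolding Var_mult_Var_mult_Var by (rule frag_of_nonzero)

lemma Var_add_Var_neq_zero:
  assumes "v \<noteq> w"
  shows "Var v + Var w \<noteq> 0"
proof
  assume "Var v + Var w = 0"
  then have "Poly_Mapping.lookup (Var v + Var w) (Poly_Mapping.single v 1) = 0"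
    by simp
  then show False using assms by (simp add: lookup_add lookup_Var single_inject)
qed

lemma Var_cubic_diff_neq_zero:
  assumes "u \<noteq> v" "w \<noteq> u"
  shows "Var u * Var v * Var w - Var u - Var v \<noteq> 0"
proof
  let ?t = "Poly_Mapping.single u 1 + Poly_Mapping.single v 1 + Poly_Mapping.single w (1 :: nat)"
  assume "Var u * Var v * Var w - Var u - Var v = 0"
  then have "Poly_Mapping.lookup (Var u * Var v * Var w - Var u - Var v) (Poly_Mapping.single u 1) = 0"
    by simp
  moreover have "?t \<noteq> Poly_Mapping.single u 1"
  proof
    assume "?t = Poly_Mapping.single u 1"
    then have "Poly_Mapping.lookup ?t v = Poly_Mapping.lookup (Poly_Mapping.single u 1) v" by simp
    then show False using assms by (simp add: lookup_add lookup_single when_def)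
  qed
  ultimately show False using assms
    unfolding Var_mult_Var_mult_Var by (simp add: lookup_minus lookup_Var lookup_single when_def single_inject)
qed

definition signed_listed_minors :: "nat \<Rightarrow> nat \<Rightarrow> zpoly set" where
  "signed_listed_minors m n = listed_minors m n \<union> uminus ` listed_minors m n"

lemma signed_listed_minors_uminus: "p \<in> signed_listed_minors m n \<Longrightarrow> - p \<in> signed_listed_minors m n"
  unfolding signed_listed_minors_def by (auto simp: image_iff)

lemma listed_minors_X: "3 \<le> m \<Longrightarrow> 1 \<le> i \<Longrightarrow> i \<le> m \<Longrightarrow> Var (X i) \<in> listed_minors m n"
  unfolding listed_minors_def by (simp only: if_True simp_thms) blast

lemma listed_minors_Y: "3 \<le> n \<Longrightarrow> 1 \<le> j \<Longrightarrow> j \<le> n \<Longrightarrow> Var (Y j) \<in> listed_minors m n"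
  unfolding listed_minors_def by (simp only: if_True simp_thms) blast

lemma listed_minors_XX:
  "3 \<le> m \<Longrightarrow> 1 \<le> i \<Longrightarrow> i < i' \<Longrightarrow> i' \<le> m \<Longrightarrow> Var (X i) * Var (X i') \<in> listed_minors m n"
  unfolding listed_minors_def by (simp only: if_True simp_thms) blast

lemma listed_minors_YY:
  "3 \<le> n \<Longrightarrow> 1 \<le> j \<Longrightarrow> j < j' \<Longrightarrow> j' \<le> n \<Longrightarrow> Var (Y j) * Var (Y j') \<in> listed_minors m n"
  unfolding listed_minors_def by (simp only: if_True simp_thms) blast

lemma listed_minors_XXX:
  "3 \<le> m \<Longrightarrow> 1 \<le> i \<Longrightarrow> i < i' \<Longrightarrow> i' < i'' \<Longrightarrow> i'' \<le> m \<Longrightarrow>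
   Var (X i) * Var (X i') * Var (X i'') \<in> listed_minors m n"
  unfolding listed_minors_def by (simp only: if_True simp_thms) blast

lemma listed_minors_YYY:
  "3 \<le> n \<Longrightarrow> 1 \<le> j \<Longrightarrow> j < j' \<Longrightarrow> j' < j'' \<Longrightarrow> j'' \<le> n \<Longrightarrow>
   Var (Y j) * Var (Y j') * Var (Y j'') \<in> listed_minors m n"
  unfolding listed_minors_def by (simp only: if_True simp_thms) blast

lemma listed_minors_YYX:
  "2 \<le> n \<Longrightarrow> 1 \<le> i \<Longrightarrow> i \<le> m \<Longrightarrow> 1 \<le> j \<Longrightarrow> j < j' \<Longrightarrow> j' \<le> n \<Longrightarrow>
   Var (Y j) * Var (Y j') * Var (X i) - Var (Y j) - Var (Y j') \<in> listed_minors m n"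
  unfolding listed_minors_def by (simp only: if_True simp_thms) blast

lemma listed_minors_XXY:
  "2 \<le> m \<Longrightarrow> 1 \<le> i \<Longrightarrow> i < i' \<Longrightarrow> i' \<le> m \<Longrightarrow> 1 \<le> j \<Longrightarrow> j \<le> n \<Longrightarrow>
   Var (X i) * Var (X i') * Var (Y j) - Var (X i) - Var (X i') \<in> listed_minors m n"
  unfolding listed_minors_def by (simp only: if_True simp_thms) blast

lemma listed_minors_X_add_X:
  "2 \<le> m \<Longrightarrow> 2 \<le> n \<Longrightarrow> 1 \<le> i \<Longrightarrow> i < i' \<Longrightarrow> i' \<le> m \<Longrightarrow> Var (X i) + Var (X i') \<in> listed_minors m n"
  unfolding listed_minors_def by (simp only: if_True simp_thms) blast

lemma listed_minors_Y_add_Y: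
  "2 \<le> m \<Longrightarrow> 2 \<le> n \<Longrightarrow> 1 \<le> j \<Longrightarrow> j < j' \<Longrightarrow> j' \<le> n \<Longrightarrow> Var (Y j) + Var (Y j') \<in> listed_minors m n"
  unfolding listed_minors_def by (simp only: if_True simp_thms) blast

lemma listed_minors_XY:
  "2 \<le> m \<Longrightarrow> 2 \<le> n \<Longrightarrow> 1 \<le> i \<Longrightarrow> i \<le> m \<Longrightarrow> 1 \<le> j \<Longrightarrow> j \<le> n \<Longrightarrow> Var (X i) * Var (Y j) \<in> listed_minors m n"
  unfolding listed_minors_def by (simp only: if_True simp_thms) blast

text \<open>The following rules are stated in the normal forms (0-based indices, right-nested products)
  in which the simplifier returns the evaluated minors below.\<close>

lemma signed_listed_X: "a < m \<Longrightarrow> 3 \<le> m \<Longrightarrow> Var (X (Suc a)) \<in> signed_listed_minors m n"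
  unfolding signed_listed_minors_def by (simp add: listed_minors_X)

lemma signed_listed_Y: "a < n \<Longrightarrow> 3 \<le> n \<Longrightarrow> Var (Y (Suc a)) \<in> signed_listed_minors m n"
  unfolding signed_listed_minors_def by (simp add: listed_minors_Y)

lemma signed_listed_XX:
  "a < m \<Longrightarrow> b < m \<Longrightarrow> a \<noteq> b \<Longrightarrow> 3 \<le> m \<Longrightarrow> Var (X (Suc a)) * Var (X (Suc b)) \<in> signed_listed_minors m n"
  using listed_minors_XX[of m "Suc a" "Suc b" n] listed_minors_XX[of m "Suc b" "Suc a" n]
  unfolding signed_listed_minors_def by (cases "a < b") (auto simp: ac_simps)

lemma signed_listed_YY:
  "a < n \<Longrightarrow> b < n \<Longrightarrow> a \<noteq> b \<Longrightarrow> 3 \<le> n \<Longrightarrow> Var (Y (Suc a)) * Var (Y (Suc b)) \<in> signed_listed_minors m n"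
  using listed_minors_YY[of n "Suc a" "Suc b" m] listed_minors_YY[of n "Suc b" "Suc a" m]
  unfolding signed_listed_minors_def by (cases "a < b") (auto simp: ac_simps)

lemma signed_listed_XXX:
  assumes "a < m" "b < m" "c < m" "a \<noteq> b" "b \<noteq> c" "a \<noteq> c"
  shows "Var (X (Suc a)) * (Var (X (Suc b)) * Var (X (Suc c))) \<in> signed_listed_minors m n"
  by (rule linorder_wlog3[where P = "\<lambda>a b c. Var (X (Suc a)) * (Var (X (Suc b)) * Var (X (Suc c))) \<in> signed_listed_minors m n" and S = "{..<m}"])
    (use assms in \<open>auto simp: ac_simps signed_listed_minors_def intro: listed_minors_XXX[unfolded mult.assoc]\<close>)

lemma signed_listed_YYY:
  assumes "a < n" "b < n" "c < n" "a \<noteq> b" "b \<noteq> c" "a \<noteq> c"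
  shows "Var (Y (Suc a)) * (Var (Y (Suc b)) * Var (Y (Suc c))) \<in> signed_listed_minors m n"
  by (rule linorder_wlog3[where P = "\<lambda>a b c. Var (Y (Suc a)) * (Var (Y (Suc b)) * Var (Y (Suc c))) \<in> signed_listed_minors m n" and S = "{..<n}"])
    (use assms in \<open>auto simp: ac_simps signed_listed_minors_def intro: listed_minors_YYY[unfolded mult.assoc]\<close>)

lemma signed_listed_XXY:
  assumes "a < m" "b < m" "a \<noteq> b" "c < n"
  shows "Var (X (Suc a)) * (Var (X (Suc b)) * Var (Y (Suc c))) - Var (X (Suc a)) - Var (X (Suc b))
      \<in> signed_listed_minors m n"
    and "Var (Y (Suc c)) * (Var (X (Suc a)) * Var (X (Suc b))) - Var (X (Suc a)) - Var (X (Suc b))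
      \<in> signed_listed_minors m n"
    and "Var (Y (Suc c)) * (Var (X (Suc a)) * Var (X (Suc b))) - Var (X (Suc b)) - Var (X (Suc a))
      \<in> signed_listed_minors m n"
  using assms listed_minors_XXY[of m "Suc a" "Suc b" "Suc c" n] listed_minors_XXY[of m "Suc b" "Suc a" "Suc c" n]
  unfolding signed_listed_minors_def by (cases "a < b"; simp add: algebra_simps)+

lemma signed_listed_YYX:
  assumes "a < n" "b < n" "a \<noteq> b" "c < m"
  shows "Var (Y (Suc a)) * (Var (Y (Suc b)) * Var (X (Suc c))) - Var (Y (Suc a)) - Var (Y (Suc b))
      \<in> signed_listed_minors m n"
    and "Var (X (Suc c)) * (Var (Y (Suc a)) * Var (Y (Suc b))) - Var (Y (Suc a)) - Var (Y (Suc b))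
      \<in> signed_listed_minors m n"
    and "Var (X (Suc c)) * (Var (Y (Suc a)) * Var (Y (Suc b))) - Var (Y (Suc b)) - Var (Y (Suc a))
      \<in> signed_listed_minors m n"
  using assms listed_minors_YYX[of n "Suc c" m "Suc a" "Suc b"] listed_minors_YYX[of n "Suc c" m "Suc b" "Suc a"]
  unfolding signed_listed_minors_def by (cases "a < b"; simp add: algebra_simps)+

lemma signed_listed_X_add_X:
  assumes "a < m" "b < m" "a \<noteq> b" "2 \<le> n"
  shows "Var (X (Suc a)) + Var (X (Suc b)) \<in> signed_listed_minors m n"
    and "- Var (X (Suc a)) - Var (X (Suc b)) \<in> signed_listed_minors m n"
  using assms listed_minors_X_add_X[of m n "Suc a" "Suc b"] listed_minors_X_add_X[of m n "Suc b" "Suc a"]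
  unfolding signed_listed_minors_def by (cases "a < b"; force simp: algebra_simps)+

lemma signed_listed_Y_add_Y:
  assumes "a < n" "b < n" "a \<noteq> b" "2 \<le> m"
  shows "Var (Y (Suc a)) + Var (Y (Suc b)) \<in> signed_listed_minors m n"
    and "- Var (Y (Suc a)) - Var (Y (Suc b)) \<in> signed_listed_minors m n"
  using assms listed_minors_Y_add_Y[of m n "Suc a" "Suc b"] listed_minors_Y_add_Y[of m n "Suc b" "Suc a"]
  unfolding signed_listed_minors_def by (cases "a < b"; force simp: algebra_simps)+

lemma signed_listed_XY:
  assumes "a < m" "b < n" "2 \<le> m" "2 \<le> n"
  shows "Var (X (Suc a)) * Var (Y (Suc b)) \<in> signed_listed_minors m n"
    and "Var (Y (Suc b)) * Var (X (Suc a)) \<in> signed_listed_minors m n"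
  using assms listed_minors_XY[of m n "Suc a" "Suc b"]
  unfolding signed_listed_minors_def by (simp_all add: mult.commute)

lemma minor3_laplacian_signed_listed:
  assumes "a < b" "b < c" "c < m + n" "d < e" "e < f" "f < m + n"
    and "minor3 (laplacian_entry m) a b c d e f \<noteq> 0"
  shows "minor3 (laplacian_entry m) a b c d e f \<in> signed_listed_minors m n"
proof -
  have "c < m \<or> b < m \<and> m \<le> c \<or> a < m \<and> m \<le> b \<or> m \<le> a"
    and "f < m \<or> e < m \<and> m \<le> f \<or> d < m \<and> m \<le> e \<or> m \<le> d"
    by linarith+
  \<comment> \<open>Once both triples are placed relative to the block boundary \<open>m\<close>, every test in
    \<open>laplacian_entry\<close> is decided, so the simplifier evaluates each of the 16 minors.\<close>
  then have "minor3 (laplacian_entry m) a b c d e f \<noteq> 0 \<longrightarrow>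
      minor3 (laplacian_entry m) a b c d e f \<in> signed_listed_minors m n"
    using assms(1-6)
    by (elim disjE conjE;
        simp add: minor3_def laplacian_entry_def ring_distribs mult.assoc split: if_splits;
        (auto intro!: signed_listed_minors_uminus signed_listed_X signed_listed_Y signed_listed_XX
           signed_listed_YY signed_listed_XXX signed_listed_YYY signed_listed_XXY signed_listed_YYX
           signed_listed_X_add_X signed_listed_Y_add_Y signed_listed_XY)?)
  with assms(7) show ?thesis by blast
qed

definition is_signed_minor :: "nat \<Rightarrow> nat \<Rightarrow> zpoly \<Rightarrow> bool" where
  "is_signed_minor m n p \<longleftrightarrow>
     p \<in> three_minors (laplacian_Kmn m n) \<or> - p \<in> three_minors (laplacian_Kmn m n)"

lemma is_signed_minor_uminus [simp]: "is_signed_minor m n (- p) \<longleftrightarrow> is_signed_minor m n p"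
  unfolding is_signed_minor_def by auto

lemma is_signed_minor_minor3:
  assumes rows: "a < m + n" "b < m + n" "c < m + n" "a \<noteq> b" "b \<noteq> c" "a \<noteq> c"
    and cols: "d < m + n" "e < m + n" "f < m + n" "d \<noteq> e" "e \<noteq> f" "d \<noteq> f"
  shows "is_signed_minor m n (minor3 (laplacian_entry m) a b c d e f)"
proof -
  have sorted: "is_signed_minor m n (minor3 (laplacian_entry m) a' b' c' d' e' f')"
    if "a' < b'" "b' < c'" "c' < m + n" "d' < e'" "e' < f'" "f' < m + n" for a' b' c' d' e' f'
    unfolding is_signed_minor_def three_minors_laplacian_Kmn_iff using that by blast
  have sorted_rows: "is_signed_minor m n (minor3 (laplacian_entry m) a' b' c' d e f)"
    if "a' < b'" "b' < c'" "c' < m + n" for a' b' c'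
  proof (rule linorder_wlog3[where P = "\<lambda>d e f. is_signed_minor m n (minor3 (laplacian_entry m) a' b' c' d e f)" and S = "{..<m + n}"])
    show "is_signed_minor m n (minor3 (laplacian_entry m) a' b' c' y x z) \<longleftrightarrow>
        is_signed_minor m n (minor3 (laplacian_entry m) a' b' c' x y z)" for x y z
      unfolding minor3_swap_cols_01[of _ _ _ _ x y z] by simp
    show "is_signed_minor m n (minor3 (laplacian_entry m) a' b' c' x z y) \<longleftrightarrow>
        is_signed_minor m n (minor3 (laplacian_entry m) a' b' c' x y z)" for x y z
      unfolding minor3_swap_cols_12[of _ _ _ _ x y z] by simp
  qed (use that cols sorted[of a' b' c'] in auto)
  show ?thesis
  proof (rule linorder_wlog3[where P = "\<lambda>a b c. is_signed_minor m n (minor3 (laplacian_entry m) a b c d e f)" and S = "{..<m + n}"])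
    show "is_signed_minor m n (minor3 (laplacian_entry m) y x z d e f) \<longleftrightarrow>
        is_signed_minor m n (minor3 (laplacian_entry m) x y z d e f)" for x y z
      unfolding minor3_swap_rows_01[of _ x y z] by simp
    show "is_signed_minor m n (minor3 (laplacian_entry m) x z y d e f) \<longleftrightarrow>
        is_signed_minor m n (minor3 (laplacian_entry m) x y z d e f)" for x y z
      unfolding minor3_swap_rows_12[of _ x y z] by simp
  qed (use rows sorted_rows in auto)
qed

lemma is_signed_minorI:
  assumes "a < m + n" "b < m + n" "c < m + n" "a \<noteq> b" "b \<noteq> c" "a \<noteq> c"
    and "d < m + n" "e < m + n" "f < m + n" "d \<noteq> e" "e \<noteq> f" "d \<noteq> f"
    and "minor3 (laplacian_entry m) a b c d e f = p \<or> minor3 (laplacian_entry m) a b c d e f = - p"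
  shows "is_signed_minor m n p"
  using is_signed_minor_minor3[OF assms(1-12)] assms(13) by auto

lemma ex_less_neq: "2 \<le> N \<Longrightarrow> \<exists>b < N. b \<noteq> (a :: nat)"
  by presburger

lemma ex_less_neq2: "3 \<le> N \<Longrightarrow> \<exists>c < N. c \<noteq> (a :: nat) \<and> c \<noteq> b"
  by presburger

lemma is_signed_minor_Y:
  assumes "1 \<le> j" "j \<le> n" "3 \<le> n" "1 \<le> m"
  shows "is_signed_minor m n (Var (Y j))"
proof -
  obtain j0 where j: "j = Suc j0" using assms by (cases j) auto
  obtain b where b: "b < n" "b \<noteq> j0" using ex_less_neq[of n j0] assms by auto
  obtain c where c: "c < n" "c \<noteq> j0" "c \<noteq> b" using ex_less_neq2[of n j0 b] assms by auto
  show ?thesis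
    by (rule is_signed_minorI[where a = 0 and b = "m + j0" and c = "m + b"
          and d = 0 and e = "m + j0" and f = "m + c"])
      (use assms j b c in \<open>simp_all add: minor3_def laplacian_entry_def algebra_simps\<close>)
qed

lemma is_signed_minor_YY:
  assumes "1 \<le> j" "j < k" "k \<le> n" "3 \<le> n" "1 \<le> m"
  shows "is_signed_minor m n (Var (Y j) * Var (Y k))"
proof -
  obtain j0 k0 where jk: "j = Suc j0" "k = Suc k0" using assms by (cases j; cases k) auto
  obtain c where c: "c < n" "c \<noteq> j0" "c \<noteq> k0" using ex_less_neq2[of n j0 k0] assms by auto
  show ?thesis
    by (rule is_signed_minorI[where a = 0 and b = "m + j0" and c = "m + k0"
          and d = "m + j0" and e = "m + k0" and f = "m + c"])
      (use assms jk c in \<open>simp_all add: minor3_def laplacian_entry_def algebra_simps\<close>)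
qed

lemma is_signed_minor_YYY:
  assumes "1 \<le> j" "j < k" "k < l" "l \<le> n"
  shows "is_signed_minor m n (Var (Y j) * Var (Y k) * Var (Y l))"
proof -
  obtain j0 k0 l0 where jkl: "j = Suc j0" "k = Suc k0" "l = Suc l0" using assms by (cases j; cases k; cases l) auto
  show ?thesis
    by (rule is_signed_minorI[where a = "m + j0" and b = "m + k0" and c = "m + l0"
          and d = "m + j0" and e = "m + k0" and f = "m + l0"])
      (use assms jkl in \<open>simp_all add: minor3_def laplacian_entry_def algebra_simps\<close>)
qed

lemma is_signed_minor_X:
  assumes "1 \<le> i" "i \<le> m" "3 \<le> m" "1 \<le> n"
  shows "is_signed_minor m n (Var (X i))"
proof -
  obtain i0 where i: "i = Suc i0" using assms by (cases i) auto
  obtain b where b: "b < m" "b \<noteq> i0" using ex_less_neq[of m i0] assms by auto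
  obtain c where c: "c < m" "c \<noteq> i0" "c \<noteq> b" using ex_less_neq2[of m i0 b] assms by auto
  show ?thesis
    by (rule is_signed_minorI[where a = m and b = i0 and c = b
          and d = m and e = i0 and f = c])
      (use assms i b c in \<open>simp_all add: minor3_def laplacian_entry_def algebra_simps\<close>)
qed

lemma is_signed_minor_XX:
  assumes "1 \<le> i" "i < k" "k \<le> m" "3 \<le> m" "1 \<le> n"
  shows "is_signed_minor m n (Var (X i) * Var (X k))"
proof -
  obtain i0 k0 where ik: "i = Suc i0" "k = Suc k0" using assms by (cases i; cases k) auto
  obtain c where c: "c < m" "c \<noteq> i0" "c \<noteq> k0" using ex_less_neq2[of m i0 k0] assms by auto
  show ?thesis
    by (rule is_signed_minorI[where a = m and b = i0 and c = k0
          and d = i0 and e = k0 and f = c])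
      (use assms ik c in \<open>simp_all add: minor3_def laplacian_entry_def algebra_simps\<close>)
qed

lemma is_signed_minor_XXX:
  assumes "1 \<le> i" "i < k" "k < l" "l \<le> m"
  shows "is_signed_minor m n (Var (X i) * Var (X k) * Var (X l))"
proof -
  obtain i0 k0 l0 where ikl: "i = Suc i0" "k = Suc k0" "l = Suc l0" using assms by (cases i; cases k; cases l) auto
  show ?thesis
    by (rule is_signed_minorI[where a = i0 and b = k0 and c = l0
          and d = i0 and e = k0 and f = l0])
      (use assms ikl in \<open>simp_all add: minor3_def laplacian_entry_def algebra_simps\<close>)
qed

lemma is_signed_minor_YYX:
  assumes "1 \<le> i" "i \<le> m" "1 \<le> j" "j < k" "k \<le> n"
  shows "is_signed_minor m n (Var (Y j) * Var (Y k) * Var (X i) - Var (Y j) - Var (Y k))"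
proof -
  obtain i0 j0 k0 where ijk: "i = Suc i0" "j = Suc j0" "k = Suc k0" using assms by (cases i; cases j; cases k) auto
  show ?thesis
    by (rule is_signed_minorI[where a = i0 and b = "m + j0" and c = "m + k0"
          and d = i0 and e = "m + j0" and f = "m + k0"])
      (use assms ijk in \<open>simp_all add: minor3_def laplacian_entry_def algebra_simps\<close>)
qed

lemma is_signed_minor_XXY:
  assumes "1 \<le> i" "i < k" "k \<le> m" "1 \<le> j" "j \<le> n"
  shows "is_signed_minor m n (Var (X i) * Var (X k) * Var (Y j) - Var (X i) - Var (X k))"
proof -
  obtain i0 j0 k0 where ijk: "i = Suc i0" "j = Suc j0" "k = Suc k0" using assms by (cases i; cases j; cases k) auto
  show ?thesis
    by (rule is_signed_minorI[where a = i0 and b = k0 and c = "m + j0"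
          and d = i0 and e = k0 and f = "m + j0"])
      (use assms ijk in \<open>simp_all add: minor3_def laplacian_entry_def algebra_simps\<close>)
qed

lemma is_signed_minor_X_add_X:
  assumes "1 \<le> i" "i < k" "k \<le> m" "2 \<le> n"
  shows "is_signed_minor m n (Var (X i) + Var (X k))"
proof -
  obtain i0 k0 where ik: "i = Suc i0" "k = Suc k0" using assms by (cases i; cases k) auto
  show ?thesis
    by (rule is_signed_minorI[where a = i0 and b = k0 and c = m
          and d = i0 and e = k0 and f = "m + 1"])
      (use assms ik in \<open>simp_all add: minor3_def laplacian_entry_def algebra_simps\<close>)
qed

lemma is_signed_minor_Y_add_Y:
  assumes "1 \<le> j" "j < k" "k \<le> n" "2 \<le> m"
  shows "is_signed_minor m n (Var (Y j) + Var (Y k))"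
proof -
  obtain j0 k0 where jk: "j = Suc j0" "k = Suc k0" using assms by (cases j; cases k) auto
  show ?thesis
    by (rule is_signed_minorI[where a = "m + j0" and b = "m + k0" and c = 0
          and d = "m + j0" and e = "m + k0" and f = 1])
      (use assms jk in \<open>simp_all add: minor3_def laplacian_entry_def algebra_simps\<close>)
qed

lemma is_signed_minor_XY:
  assumes "1 \<le> i" "i \<le> m" "1 \<le> j" "j \<le> n" "2 \<le> m" "2 \<le> n"
  shows "is_signed_minor m n (Var (X i) * Var (Y j))"
proof -
  obtain i0 j0 where ij: "i = Suc i0" "j = Suc j0" using assms by (cases i; cases j) auto
  obtain b where b: "b < m" "b \<noteq> i0" using ex_less_neq[of m i0] assms by auto
  obtain l where l: "l < n" "l \<noteq> j0" using ex_less_neq[of n j0] assms by auto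
  show ?thesis
    by (rule is_signed_minorI[where a = i0 and b = b and c = "m + j0"
          and d = i0 and e = "m + j0" and f = "m + l"])
      (use assms ij b l in \<open>simp_all add: minor3_def laplacian_entry_def algebra_simps\<close>)
qed

lemma listed_minors_is_signed_minor:
  assumes "1 \<le> m" "1 \<le> n" "p \<in> listed_minors m n"
  shows "is_signed_minor m n p"
  using assms unfolding listed_minors_def
  by (auto split: if_splits intro: is_signed_minor_Y is_signed_minor_YY is_signed_minor_YYY
      is_signed_minor_X is_signed_minor_XX is_signed_minor_XXX is_signed_minor_YYX is_signed_minor_XXY
      is_signed_minor_X_add_X is_signed_minor_Y_add_Y is_signed_minor_XY)

lemma zero_notin_listed_minors: "0 \<notin> listed_minors m n"
  unfolding listed_minors_def
  using Var_neq_zero Var_mult_Var_neq_zero Var_mult_Var_mult_Var_neq_zero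
    Var_add_Var_neq_zero Var_cubic_diff_neq_zero
  by (auto split: if_splits)

theorem lemma4p6:
  fixes m n :: nat
  assumes "m \<ge> 1" and "n \<ge> 1"
  shows "{p. p \<noteq> 0 \<and> (p \<in> three_minors (laplacian_Kmn m n) \<or> - p \<in> three_minors (laplacian_Kmn m n))}
         = listed_minors m n \<union> uminus ` listed_minors m n"
proof (intro equalityI subsetI)
  fix p
  assume "p \<in> {p. p \<noteq> 0 \<and> (p \<in> three_minors (laplacian_Kmn m n) \<or> - p \<in> three_minors (laplacian_Kmn m n))}"
  then obtain q where q: "q \<in> three_minors (laplacian_Kmn m n)" "q \<noteq> 0" "p = q \<or> p = - q"
    by force
  from q(1) obtain a b c d e f where "a < b" "b < c" "c < m + n" "d < e" "e < f" "f < m + n"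
    and "q = minor3 (laplacian_entry m) a b c d e f"
    unfolding three_minors_laplacian_Kmn_iff by blast
  with q(2) have "q \<in> signed_listed_minors m n"
    using minor3_laplacian_signed_listed by blast
  with q(3) have "p \<in> signed_listed_minors m n"
    using signed_listed_minors_uminus by blast
  then show "p \<in> listed_minors m n \<union> uminus ` listed_minors m n"
    unfolding signed_listed_minors_def .
next
  fix p
  assume "p \<in> listed_minors m n \<union> uminus ` listed_minors m n"
  then obtain q where "q \<in> listed_minors m n" "p = q \<or> p = - q"
    by blast
  then show "p \<in> {p. p \<noteq> 0 \<and> (p \<in> three_minors (laplacian_Kmn m n) \<or> - p \<in> three_minors (laplacian_Kmn m n))}"
    using listed_minors_is_signed_minor[OF assms] zero_notin_listed_minors
    unfolding is_signed_minor_def by force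
qed

end
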